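(* Let $K$ be a field with algebraic closure $\overline{K}$, let $U=\{u_1,\dots,u_d\}$ be parameters and $X=\{x_1,\dots,x_n\}$ variables with $u_1\prec\dots\prec u_d\prec x_1\prec\dots\prec x_n$. Let $\mathbf{P}_1$ be a parametric system in $K[U][X]$ and let $\mathbb{S}=\{\mathbf{C}_1,\dots,\mathbf{C}_m\}$ be a Wu's decomposition of $\mathbf{P}_1$ in $K[U][X]$. Let $\mathcal{L}=\{\mathbf{C}_{l,1},\dots,\mathbf{C}_{l,k}\}\subseteq\mathbb{S}$ be a line of $\mathbb{S}$ with corresponding systems $\{\mathbf{P}_1,\dots,\mathbf{P}_k\}$. Then for every $a\in\overline{K}^d\setminus \mathrm{V}^U(\mathbf{C}_{l,k})$ and every $i$ with $1\le i\le k$, there exists a polynomial $p_i\in\mathbf{P}_i$ such that $p_i(a)$ is not the zero polynomial of $\overline{K}[X]$.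
   Context: A polynomial system is a non-empty finite subset of $K[U][X]$; it is a parametric system if it is contained in $K[U][X]\setminus K[X]$. For $F\in K[U][X]\setminus\{0\}$, its class $\mathrm{cls}(F)$ is the largest $p$ with $\deg(F,x_p)>0$ (and $0$ if no $x_i$ occurs); if $\mathrm{cls}(F)=p>0$, the main variable is $x_p$, and writing $F=C_0x_p^m+\dots+C_m$ with $C_0\ne0$, the initial is $\mathrm{I}(F)=C_0$ and the rank is $x_p^m$. A triangular set is a finite set $\{T_1,\dots,T_r\}\subset K[U][X]$ with $0<\mathrm{cls}(T_1)<\dots<\mathrm{cls}(T_r)$; $\mathrm{I}(\mathbf{T})=\prod_i \mathrm{I}(T_i)$. $F$ is reduced w.r.t. $\mathbf{T}$ if $\deg(F,\mathrm{mvar}(T_i))<\deg(T_i,\mathrm{mvar}(T_i))$ for all $i$. A non-contradictory ascending chain is a triangular set with each $T_i$ reduced w.r.t. $\{T_1,\dots,T_{i-1}\}$; a contradictory ascending chain is a set $\{F\}$ with $F\in K[U]$, $F\ne0$; an ascending chain is either. For a triangular set $\mathbf{T}=\{T_1,\dots,T_r\}$, $\mathrm{prem}(F,\mathbf{T})=\mathrm{prem}(\dots\mathrm{prem}(\mathrm{prem}(F,T_r),T_{r-1})\dots,T_1)$ (successive pseudo-remainders with respect to the main variables). An ascending chain $\mathbf{C}$ is a characteristic set of $\mathbf{P}$ if $\mathbf{C}\subset\langle\mathbf{P}\rangle_{K[U][X]}$ and $\mathrm{prem}(P,\mathbf{C})=0$ for all $P\in\mathbf{P}$. A Wu's decomposition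 of $\mathbf{P}$ is the finite set of ascending chains produced by Wu's method: compute a characteristic set $\mathbf{C}$ of $\mathbf{P}$ (contradictory or not); if $\mathbf{C}=\{C_1,\dots,C_t\}$ is non-contradictory, recursively apply the method to each system $\mathbf{P}\cup\mathbf{C}\cup\{\mathrm{I}(C_i)\}$; all characteristic sets so obtained form the decomposition. A subset $\mathcal{L}=\{\mathbf{C}_{l,1},\dots,\mathbf{C}_{l,k}\}$ of a Wu's decomposition $\mathbb{S}$ of $\mathbf{P}_1$ is a line, with corresponding systems $\mathbf{P}_1,\dots,\mathbf{P}_k$, if: (1) $\mathbf{C}_{l,1}$ is a characteristic set of $\mathbf{P}_1$; (2) if $k\ge2$, for each $2\le i\le k$, $\mathbf{C}_{l,i}$ is a characteristic set of $\mathbf{P}_i=\mathbf{P}_{i-1}\cup\mathbf{C}_{l,i-1}\cup\{\mathrm{I}(C_{l,i-1})\}$ for some $C_{l,i-1}\in\mathbf{C}_{l,i-1}$; (3) if $k=1$, $\mathbf{C}_{l,1}$ is contradictory; otherwise $\mathbf{C}_{l,1},\dots,\mathbf{C}_{l,k-1}$ are non-contradictory and $\mathbf{C}_{l,k}$ is contradictory. For $a\in\overline{K}^d$ and $F\in K[U][X]$, $F(a)\in\overline{K}[X]$ denotes the substitution $U\mapsto a$. For $\mathbf{B}\subset K[U]$, $\mathrm{V}^U(\mathbf{B})=\{a\in\overline{K}^d: B(a)=0\ \forall B\in\mathbf{B}\}$. *)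

theory Defs
  imports "HOL-Library.Poly_Mapping" "HOL-Computational_Algebra.Polynomial"
begin

text \<open>Variable ordering u_1 < ... < u_d < x_1 < ... < x_n: parameter u_j is variable index j-1,
  variable x_p is variable index d+p-1.\<close>

type_synonym 'a mpoly = "(nat \<Rightarrow>\<^sub>0 nat) \<Rightarrow>\<^sub>0 'a"

definition in_vars :: "nat set \<Rightarrow> 'a::zero mpoly \<Rightarrow> bool" where
  "in_vars V F \<longleftrightarrow> (\<forall>m\<in>Poly_Mapping.keys F. Poly_Mapping.keys m \<subseteq> V)"

definition in_KUX :: "nat \<Rightarrow> nat \<Rightarrow> 'a::zero mpoly \<Rightarrow> bool" where
  "in_KUX d n F \<longleftrightarrow> in_vars {..<d+n} F"

definition in_KU :: "nat \<Rightarrow> 'a::zero mpoly \<Rightarrow> bool" where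
  "in_KU d F \<longleftrightarrow> in_vars {..<d} F"

definition in_KX :: "nat \<Rightarrow> nat \<Rightarrow> 'a::zero mpoly \<Rightarrow> bool" where
  "in_KX d n F \<longleftrightarrow> in_vars {d..<d+n} F"

definition deg_in :: "nat \<Rightarrow> 'a::zero mpoly \<Rightarrow> nat" where
  "deg_in v F = Max (insert 0 ((\<lambda>m. Poly_Mapping.lookup m v) ` Poly_Mapping.keys F))"

definition coeff_var :: "nat \<Rightarrow> nat \<Rightarrow> 'a::comm_monoid_add mpoly \<Rightarrow> 'a mpoly" where
  "coeff_var v k F = (\<Sum>m\<in>{m\<in>Poly_Mapping.keys F. Poly_Mapping.lookup m v = k}.
      Poly_Mapping.single (m - Poly_Mapping.single v k) (Poly_Mapping.lookup F m))"

definition cls :: "nat \<Rightarrow> nat \<Rightarrow> 'a::zero mpoly \<Rightarrow> nat" where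
  "cls d n F = (if \<exists>p\<in>{1..n}. deg_in (d+p-1) F > 0
                then Max {p\<in>{1..n}. deg_in (d+p-1) F > 0} else 0)"

definition mvar_idx :: "nat \<Rightarrow> nat \<Rightarrow> 'a::zero mpoly \<Rightarrow> nat" where
  "mvar_idx d n F = d + cls d n F - 1"

definition init :: "nat \<Rightarrow> nat \<Rightarrow> 'a::comm_monoid_add mpoly \<Rightarrow> 'a mpoly" where
  "init d n F = coeff_var (mvar_idx d n F) (deg_in (mvar_idx d n F) F) F"

definition triangular_set :: "nat \<Rightarrow> nat \<Rightarrow> 'a::zero mpoly set \<Rightarrow> bool" where
  "triangular_set d n T \<longleftrightarrow> finite T \<and> (\<forall>F\<in>T. in_KUX d n F \<and> F \<noteq> 0 \<and> cls d n F > 0)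
      \<and> inj_on (cls d n) T"

definition reduced :: "nat \<Rightarrow> nat \<Rightarrow> 'a::zero mpoly \<Rightarrow> 'a mpoly set \<Rightarrow> bool" where
  "reduced d n F T \<longleftrightarrow> (\<forall>G\<in>T. deg_in (mvar_idx d n G) F < deg_in (mvar_idx d n G) G)"

definition noncontradictory_chain :: "nat \<Rightarrow> nat \<Rightarrow> 'a::zero mpoly set \<Rightarrow> bool" where
  "noncontradictory_chain d n C \<longleftrightarrow> triangular_set d n C
      \<and> (\<forall>F\<in>C. reduced d n F {G\<in>C. cls d n G < cls d n F})"

definition contradictory_chain :: "nat \<Rightarrow> 'a::zero mpoly set \<Rightarrow> bool" where
  "contradictory_chain d C \<longleftrightarrow> (\<exists>F. C = {F} \<and> in_KU d F \<and> F \<noteq> 0)"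

definition ascending_chain :: "nat \<Rightarrow> nat \<Rightarrow> 'a::zero mpoly set \<Rightarrow> bool" where
  "ascending_chain d n C \<longleftrightarrow> noncontradictory_chain d n C \<or> contradictory_chain d C"

definition prem1 :: "nat \<Rightarrow> nat \<Rightarrow> nat \<Rightarrow> 'a::field mpoly \<Rightarrow> 'a mpoly \<Rightarrow> 'a mpoly" where
  "prem1 d n v G F = (THE R. in_KUX d n R \<and> deg_in v R < deg_in v F \<and>
      (\<exists>Q. in_KUX d n Q \<and>
        coeff_var v (deg_in v F) F ^ (deg_in v G + 1 - deg_in v F) * G = Q * F + R))"

text \<open>prem(G, T) = prem(...prem(prem(G, T_r), T_{r-1})..., T_1).\<close>
definition prem :: "nat \<Rightarrow> nat \<Rightarrow> 'a::field mpoly \<Rightarrow> 'a mpoly set \<Rightarrow> 'a mpoly" where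
  "prem d n G T = foldr (\<lambda>F R. prem1 d n (mvar_idx d n F) R F)
      (sorted_key_list_of_set (cls d n) T) G"

definition ideal_gen :: "nat \<Rightarrow> nat \<Rightarrow> 'a::comm_ring_1 mpoly set \<Rightarrow> 'a mpoly set" where
  "ideal_gen d n P = {(\<Sum>p\<in>S. g p * p) | S g. finite S \<and> S \<subseteq> P \<and> (\<forall>p\<in>S. in_KUX d n (g p))}"

text \<open>Characteristic set. The prem condition is imposed for non-contradictory chains;
  for a contradictory chain {F} (F in K[U]) every pseudo-remainder is 0.\<close>
definition char_set :: "nat \<Rightarrow> nat \<Rightarrow> 'a::field mpoly set \<Rightarrow> 'a mpoly set \<Rightarrow> bool" where
  "char_set d n P C \<longleftrightarrow> C \<subseteq> ideal_gen d n P \<and>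
     (contradictory_chain d C \<or> (noncontradictory_chain d n C \<and> (\<forall>p\<in>P. prem d n p C = 0)))"

definition poly_system :: "nat \<Rightarrow> nat \<Rightarrow> 'a::zero mpoly set \<Rightarrow> bool" where
  "poly_system d n P \<longleftrightarrow> P \<noteq> {} \<and> finite P \<and> (\<forall>F\<in>P. in_KUX d n F)"

definition parametric_system :: "nat \<Rightarrow> nat \<Rightarrow> 'a::zero mpoly set \<Rightarrow> bool" where
  "parametric_system d n P \<longleftrightarrow> poly_system d n P \<and> (\<forall>F\<in>P. \<not> in_KX d n F)"

text \<open>Wu's decompositions of P (all possible outcomes of Wu's method).\<close>
inductive wu_decomp :: "nat \<Rightarrow> nat \<Rightarrow> 'a::field mpoly set \<Rightarrow> 'a mpoly set set \<Rightarrow> bool"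
  for d n where
  contra: "char_set d n P C \<Longrightarrow> contradictory_chain d C \<Longrightarrow> wu_decomp d n P {C}"
| noncontra: "char_set d n P C \<Longrightarrow> noncontradictory_chain d n C \<Longrightarrow>
     (\<forall>c\<in>C. wu_decomp d n (P \<union> C \<union> {init d n c}) (Sf c)) \<Longrightarrow>
     wu_decomp d n P (insert C (\<Union>c\<in>C. Sf c))"

definition is_line :: "nat \<Rightarrow> nat \<Rightarrow> 'a::field mpoly set set \<Rightarrow> 'a mpoly set \<Rightarrow> nat
    \<Rightarrow> (nat \<Rightarrow> 'a mpoly set) \<Rightarrow> (nat \<Rightarrow> 'a mpoly set) \<Rightarrow> bool" where
  "is_line d n S P1 k Cs Ps \<longleftrightarrow> k \<ge> 1 \<and> Cs ` {1..k} \<subseteq> S \<and> Ps 1 = P1 \<and>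
     (\<forall>i\<in>{1..k}. char_set d n (Ps i) (Cs i)) \<and>
     (\<forall>i\<in>{2..k}. \<exists>c\<in>Cs (i-1). Ps i = Ps (i-1) \<union> Cs (i-1) \<union> {init d n c}) \<and>
     (\<forall>i\<in>{1..<k}. noncontradictory_chain d n (Cs i)) \<and>
     contradictory_chain d (Cs k)"

definition is_alg_closure :: "('a::field \<Rightarrow> 'b::field) \<Rightarrow> bool" where
  "is_alg_closure emb \<longleftrightarrow> emb 1 = 1 \<and> (\<forall>x y. emb (x + y) = emb x + emb y)
     \<and> (\<forall>x y. emb (x * y) = emb x * emb y)
     \<and> (\<forall>p::'b poly. Polynomial.degree p > 0 \<longrightarrow> (\<exists>z. poly p z = 0))
     \<and> (\<forall>z. \<exists>p::'b poly. p \<noteq> 0 \<and> (\<forall>i. Polynomial.coeff p i \<in> range emb) \<and> poly p z = 0)"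

definition xpart :: "nat \<Rightarrow> (nat \<Rightarrow>\<^sub>0 nat) \<Rightarrow> (nat \<Rightarrow>\<^sub>0 nat)" where
  "xpart d m = (\<Sum>v\<in>{v\<in>Poly_Mapping.keys m. d \<le> v}. Poly_Mapping.single v (Poly_Mapping.lookup m v))"

text \<open>F(a) in Kbar[X]: substitute u_j := a!(j-1), coefficients mapped by emb.\<close>
definition subst_par :: "('a::field \<Rightarrow> 'b::field) \<Rightarrow> nat \<Rightarrow> 'b list \<Rightarrow> 'a mpoly \<Rightarrow> 'b mpoly" where
  "subst_par emb d a F = (\<Sum>m\<in>Poly_Mapping.keys F.
      Poly_Mapping.single (xpart d m)
        (emb (Poly_Mapping.lookup F m) * (\<Prod>j<d. (a ! j) ^ Poly_Mapping.lookup m j)))"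

definition VU :: "('a::field \<Rightarrow> 'b::field) \<Rightarrow> nat \<Rightarrow> 'a mpoly set \<Rightarrow> 'b list set" where
  "VU emb d B = {a. length a = d \<and> (\<forall>F\<in>B. subst_par emb d a F = 0)}"

end

theory Submission imports Defs begin

text \<open>Specialising the parameters at a is a ring homomorphism that commutes with taking
  coefficients with respect to the variables x_p. Hence a common zero of a system P is a zero
  of the ideal generated by P, and a zero of a polynomial of positive class is a zero of its
  initial. Along a line this propagates: if a annihilates P_i, it annihilates the characteristic
  set C_i and the initial of one of its elements, hence P_(i+1), and so on up to the contradictory
  chain C_k. So a \<notin> V(C_k) cannot annihilate any P_i.\<close>

definition extend_termwise ::
    "('x \<Rightarrow> 'c::comm_monoid_add \<Rightarrow> 'r::comm_monoid_add) \<Rightarrow> ('x \<Rightarrow>\<^sub>0 'c) \<Rightarrow> 'r" where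
  "extend_termwise h F = (\<Sum>m\<in>Poly_Mapping.keys F. h m (Poly_Mapping.lookup F m))"

lemma sum_single_lookup:
  "(\<Sum>m\<in>Poly_Mapping.keys F. Poly_Mapping.single m (Poly_Mapping.lookup F m)) = F"
proof (rule poly_mapping_eqI)
  fix k
  show "Poly_Mapping.lookup (\<Sum>m\<in>Poly_Mapping.keys F. Poly_Mapping.single m (Poly_Mapping.lookup F m)) k
      = Poly_Mapping.lookup F k"
    by (cases "k \<in> Poly_Mapping.keys F") (auto simp: lookup_sum lookup_single when_def in_keys_iff)
qed

lemma additive_sum:
  assumes "\<And>x y. T (x + y) = T x + T y" "T 0 = 0"
  shows "T (\<Sum>i\<in>I. f i) = (\<Sum>i\<in>I. T (f i))"
  by (induction I rule: infinite_finite_induct) (auto simp: assms)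

lemma additive_extend_termwise:
  assumes "\<And>x y. T (x + y) = T x + T y" "T 0 = 0"
  shows "T (extend_termwise h F) = extend_termwise (\<lambda>m c. T (h m c)) F"
  unfolding extend_termwise_def by (rule additive_sum[OF assms])

locale termwise_additive =
  fixes h :: "'x \<Rightarrow> 'c::comm_monoid_add \<Rightarrow> 'r::comm_monoid_add"
  assumes zero: "h m 0 = 0" and add: "h m (x + y) = h m x + h m y"
begin

lemma extend_termwise_superset:
  "finite A \<Longrightarrow> Poly_Mapping.keys F \<subseteq> A \<Longrightarrow>
    extend_termwise h F = (\<Sum>m\<in>A. h m (Poly_Mapping.lookup F m))"
  unfolding extend_termwise_def by (rule sum.mono_neutral_left) (auto simp: in_keys_iff zero)

lemma extend_termwise_zero [simp]: "extend_termwise h 0 = 0"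
  by (simp add: extend_termwise_def)

lemma extend_termwise_single [simp]: "extend_termwise h (Poly_Mapping.single m c) = h m c"
  by (subst extend_termwise_superset[of "{m}"]) auto

lemma extend_termwise_add [simp]:
  "extend_termwise h (F + G) = extend_termwise h F + extend_termwise h G"
proof -
  let ?A = "Poly_Mapping.keys F \<union> Poly_Mapping.keys G"
  have "extend_termwise h (F + G) = (\<Sum>m\<in>?A. h m (Poly_Mapping.lookup (F + G) m))"
    using keys_add[of F G] by (intro extend_termwise_superset) auto
  also have "\<dots> = (\<Sum>m\<in>?A. h m (Poly_Mapping.lookup F m)) + (\<Sum>m\<in>?A. h m (Poly_Mapping.lookup G m))"
    by (simp add: lookup_add add sum.distrib)
  also have "\<dots> = extend_termwise h F + extend_termwise h G"
    using extend_termwise_superset[of ?A F] extend_termwise_superset[of ?A G] by simp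
  finally show ?thesis .
qed

lemma extend_termwise_sum: "extend_termwise h (\<Sum>i\<in>I. f i) = (\<Sum>i\<in>I. extend_termwise h (f i))"
  by (rule additive_sum) simp_all

end

definition coeff_var_term :: "nat \<Rightarrow> nat \<Rightarrow> (nat \<Rightarrow>\<^sub>0 nat) \<Rightarrow> 'a::comm_monoid_add \<Rightarrow> 'a mpoly" where
  "coeff_var_term v k m c =
    (if Poly_Mapping.lookup m v = k then Poly_Mapping.single (m - Poly_Mapping.single v k) c else 0)"

lemma coeff_var_eq_extend_termwise: "coeff_var v k = extend_termwise (coeff_var_term v k)"
  by (rule ext) (simp add: coeff_var_def extend_termwise_def coeff_var_term_def sum.inter_filter)

lemma termwise_additive_coeff_var_term: "termwise_additive (coeff_var_term v k)"
  by unfold_locales (auto simp: coeff_var_term_def single_add)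

lemma lookup_xpart: "Poly_Mapping.lookup (xpart d m) v = (if d \<le> v then Poly_Mapping.lookup m v else 0)"
  by (cases "v \<in> Poly_Mapping.keys m")
     (auto simp: xpart_def lookup_sum lookup_single when_def in_keys_iff)

lemma xpart_add: "xpart d (m + m') = xpart d m + xpart d m'"
  by (rule poly_mapping_eqI) (simp add: lookup_xpart lookup_add)

definition par_weight :: "'b::field list \<Rightarrow> nat \<Rightarrow> (nat \<Rightarrow>\<^sub>0 nat) \<Rightarrow> 'b" where
  "par_weight a d m = (\<Prod>j<d. (a ! j) ^ Poly_Mapping.lookup m j)"

lemma par_weight_add: "par_weight a d (m + m') = par_weight a d m * par_weight a d m'"
  by (simp add: par_weight_def lookup_add power_add prod.distrib)

definition subst_par_term ::
    "('a::field \<Rightarrow> 'b::field) \<Rightarrow> nat \<Rightarrow> 'b list \<Rightarrow> (nat \<Rightarrow>\<^sub>0 nat) \<Rightarrow> 'a \<Rightarrow> 'b mpoly" where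
  "subst_par_term emb d a m c = Poly_Mapping.single (xpart d m) (emb c * par_weight a d m)"

lemma subst_par_eq_extend_termwise: "subst_par emb d a = extend_termwise (subst_par_term emb d a)"
  by (rule ext) (simp add: subst_par_def extend_termwise_def subst_par_term_def par_weight_def)

locale ring_hom_fun =
  fixes emb :: "'a::field \<Rightarrow> 'b::field"
  assumes hom_add: "emb (x + y) = emb x + emb y" and hom_mult: "emb (x * y) = emb x * emb y"
begin

lemma hom_zero: "emb 0 = 0"
  using hom_add[of 0 0] by (metis add_cancel_right_right add.right_neutral)

lemma termwise_additive_subst_par_term: "termwise_additive (subst_par_term emb d a)"
  by unfold_locales (auto simp: subst_par_term_def hom_zero hom_add distrib_right single_add)

lemma subst_par_term_mult:
  "subst_par_term emb d a (m + m') (c * c') = subst_par_term emb d a m c * subst_par_term emb d a m' c'"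
  by (simp add: subst_par_term_def mult_single xpart_add par_weight_add hom_mult mult_ac)

lemma subst_par_add: "subst_par emb d a (F + G) = subst_par emb d a F + subst_par emb d a G"
proof -
  interpret termwise_additive "subst_par_term emb d a" by (rule termwise_additive_subst_par_term)
  show ?thesis by (simp add: subst_par_eq_extend_termwise)
qed

lemma subst_par_sum: "subst_par emb d a (\<Sum>i\<in>I. f i) = (\<Sum>i\<in>I. subst_par emb d a (f i))"
  by (rule additive_sum) (simp add: subst_par_add, simp add: subst_par_def)

lemma subst_par_mult: "subst_par emb d a (F * G) = subst_par emb d a F * subst_par emb d a G"
proof -
  interpret termwise_additive "subst_par_term emb d a" by (rule termwise_additive_subst_par_term)
  let ?s = "\<lambda>F m. Poly_Mapping.single m (Poly_Mapping.lookup F m)"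
  have "F * G = (\<Sum>m\<in>Poly_Mapping.keys F. ?s F m) * (\<Sum>m'\<in>Poly_Mapping.keys G. ?s G m')"
    by (simp add: sum_single_lookup)
  also have "\<dots> = (\<Sum>m\<in>Poly_Mapping.keys F. \<Sum>m'\<in>Poly_Mapping.keys G. ?s F m * ?s G m')"
    by (rule sum_product)
  finally have "extend_termwise (subst_par_term emb d a) (F * G)
      = (\<Sum>m\<in>Poly_Mapping.keys F. \<Sum>m'\<in>Poly_Mapping.keys G.
          subst_par_term emb d a m (Poly_Mapping.lookup F m) * subst_par_term emb d a m' (Poly_Mapping.lookup G m'))"
    by (simp add: extend_termwise_sum mult_single subst_par_term_mult)
  also have "\<dots> = extend_termwise (subst_par_term emb d a) F * extend_termwise (subst_par_term emb d a) G"
    by (simp add: extend_termwise_def sum_product)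
  finally show ?thesis by (simp add: subst_par_eq_extend_termwise)
qed

lemma subst_par_coeff_var:
  assumes "d \<le> v"
  shows "subst_par emb d a (coeff_var v k F) = coeff_var v k (subst_par emb d a F)"
proof -
  interpret S: termwise_additive "subst_par_term emb d a" by (rule termwise_additive_subst_par_term)
  interpret C: termwise_additive "coeff_var_term v k" by (rule termwise_additive_coeff_var_term)
  have xpart_diff: "xpart d (m - Poly_Mapping.single v k) = xpart d m - Poly_Mapping.single v k" for m
    using assms by (intro poly_mapping_eqI) (auto simp: lookup_xpart lookup_minus lookup_single when_def)
  have weight_diff: "par_weight a d (m - Poly_Mapping.single v k) = par_weight a d m" for m
    using assms unfolding par_weight_def
    by (intro prod.cong refl) (auto simp: lookup_minus lookup_single when_def)
  have "extend_termwise (subst_par_term emb d a) (coeff_var_term v k m c)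
      = extend_termwise (coeff_var_term v k) (subst_par_term emb d a m c)" for m c
    using assms
    by (simp add: coeff_var_term_def subst_par_term_def lookup_xpart xpart_diff weight_diff)
  then show ?thesis
    unfolding subst_par_eq_extend_termwise coeff_var_eq_extend_termwise
    by (simp add: additive_extend_termwise)
qed

lemma VU_ideal_gen:
  assumes "a \<in> VU emb d P" "F \<in> ideal_gen d n P"
  shows "a \<in> VU emb d {F}"
proof -
  obtain S g where F: "F = (\<Sum>p\<in>S. g p * p)" "S \<subseteq> P"
    using assms(2) unfolding ideal_gen_def by blast
  have "subst_par emb d a F = (\<Sum>p\<in>S. subst_par emb d a (g p) * subst_par emb d a p)"
    unfolding F(1) by (simp add: subst_par_sum subst_par_mult)
  also have "\<dots> = 0"
    using assms(1) F(2) by (intro sum.neutral) (auto simp: VU_def)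
  finally show ?thesis using assms(1) by (simp add: VU_def)
qed

lemma VU_char_set: "char_set d n P C \<Longrightarrow> a \<in> VU emb d P \<Longrightarrow> a \<in> VU emb d C"
  using VU_ideal_gen unfolding char_set_def VU_def by blast

lemma VU_init:
  assumes "cls d n c > 0" "a \<in> VU emb d {c}"
  shows "a \<in> VU emb d {init d n c}"
proof -
  have "d \<le> mvar_idx d n c" using assms(1) by (simp add: mvar_idx_def)
  then have "subst_par emb d a (init d n c)
      = coeff_var (mvar_idx d n c) (deg_in (mvar_idx d n c) c) (subst_par emb d a c)"
    by (simp add: init_def subst_par_coeff_var)
  then show ?thesis
    using assms(2) by (simp add: VU_def coeff_var_def)
qed

lemma VU_line_step:
  assumes line: "is_line d n S P1 k Cs Ps" and i: "i \<in> {1..<k}" and a: "a \<in> VU emb d (Ps i)"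
  shows "a \<in> VU emb d (Ps (Suc i))"
proof -
  have "Suc i \<in> {2..k}" using i by simp
  then obtain c where c: "c \<in> Cs i" and Ps_Suc: "Ps (Suc i) = Ps i \<union> Cs i \<union> {init d n c}"
    using line unfolding is_line_def by fastforce
  have "char_set d n (Ps i) (Cs i)" using line i unfolding is_line_def by auto
  then have a_Cs: "a \<in> VU emb d (Cs i)" using a by (rule VU_char_set)
  have "noncontradictory_chain d n (Cs i)" using line i unfolding is_line_def by blast
  then have "cls d n c > 0" using c unfolding noncontradictory_chain_def triangular_set_def by blast
  moreover have "a \<in> VU emb d {c}" using a_Cs c by (simp add: VU_def)
  ultimately have "a \<in> VU emb d {init d n c}" by (rule VU_init)
  then show ?thesis using a a_Cs Ps_Suc by (auto simp: VU_def)
qed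

lemma VU_line_mono:
  assumes "is_line d n S P1 k Cs Ps" "1 \<le> i" "i \<le> j" "j \<le> k" "a \<in> VU emb d (Ps i)"
  shows "a \<in> VU emb d (Ps j)"
  using assms(3-5)
proof (induction j rule: dec_induct)
  case (step j)
  then show ?case using VU_line_step[OF assms(1)] assms(2) by simp
qed

end

lemma ring_hom_fun_alg_closure: "is_alg_closure emb \<Longrightarrow> ring_hom_fun emb"
  by unfold_locales (simp_all add: is_alg_closure_def)

theorem lemma1:
  fixes emb :: "'a::field \<Rightarrow> 'b::field"
    and d n k :: nat
    and P1 :: "'a mpoly set"
    and S :: "'a mpoly set set"
    and Cs Ps :: "nat \<Rightarrow> 'a mpoly set"
  assumes "is_alg_closure emb"
    and "parametric_system d n P1"
    and "wu_decomp d n P1 S"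
    and "is_line d n S P1 k Cs Ps"
  shows "\<forall>a. length a = d \<and> a \<notin> VU emb d (Cs k) \<longrightarrow>
           (\<forall>i\<in>{1..k}. \<exists>p\<in>Ps i. subst_par emb d a p \<noteq> 0)"
proof (intro allI impI ballI)
  fix a i
  assume a: "length a = d \<and> a \<notin> VU emb d (Cs k)" and i: "i \<in> {1..k}"
  interpret ring_hom_fun emb using assms(1) by (rule ring_hom_fun_alg_closure)
  have "a \<notin> VU emb d (Ps i)"
  proof
    assume "a \<in> VU emb d (Ps i)"
    then have "a \<in> VU emb d (Ps k)" using VU_line_mono[OF assms(4), of i k] i by auto
    moreover have "char_set d n (Ps k) (Cs k)" using assms(4) unfolding is_line_def by simp
    ultimately have "a \<in> VU emb d (Cs k)" by (rule VU_char_set[rotated])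
    then show False using a by simp
  qed
  then show "\<exists>p\<in>Ps i. subst_par emb d a p \<noteq> 0" using a by (auto simp: VU_def)
qed

end
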